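(* Let $\mathcal P$ be finite, $\sigma$ a switching signal, and $a_p^i:\mathbb R_{\ge0}\to\mathbb R$ ($i\in\{1,\dots,m\}$, $p\in\mathcal P$) locally Lebesgue integrable functions. (1) Let $\hat a_p^i:=\limsup_{t\to\infty:\,\sigma(t)=p}a_p^i(t)$. If $\hat a_p^i$ is finite for all $i$ and all $p\in\mathcal P_\infty$, then $$\limsup_{T\to\infty}\sum_{i=1}^m\frac1T\max_{t\in[0,T]}\sum_{p\in\mathcal P}\int_0^ta_p^i(s)\mathbf 1[\sigma(s)=p]\,ds\le\limsup_{T\to\infty}\sum_{i=1}^m\frac1T\max_{t\in[0,T]}\sum_{p\in\mathcal P_+}\hat a_p^i\tau_p(t).$$ (2) Let $\check a_p^i:=\liminf_{t\to\infty:\,\sigma(t)=p}a_p^i(t)$. If $\check a_p^i$ is finite for all $i$ and all $p\in\mathcal P_\infty$, then $$\limsup_{T\to\infty}\sum_{i=1}^m\frac1T\max_{t\in[0,T]}\sum_{p\in\mathcal P}\int_0^ta_p^i(s)\mathbf 1[\sigma(s)=p]\,ds\ge\limsup_{T\to\infty}\sum_{i=1}^m\frac1T\max_{t\in[0,T]}\sum_{p\in\mathcal P_+}\check a_p^i\tau_p(t)$$ and $$\limsup_{t\to\infty}\sum_{i=1}^m\max\Big\{\frac1t\sum_{p\in\mathcal P}\int_0^ta_p^i(s)\mathbf 1[\sigma(s)=p]\,ds,\,0\Big\}\ge\limsup_{t\to\infty}\sum_{i=1}^m\max\Big\{\sum_{p\in\mathcal P_+}\check a_p^i\rho_p(t)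,\,0\Big\}.$$
   Context: A switching signal is a right-continuous piecewise-constant $\sigma:\mathbb R_{\ge0}\to\mathcal P$ with finitely many switches in every bounded interval. $\tau_p(t):=\int_0^t\mathbf 1[\sigma(s)=p]ds$, $\rho_p(t):=\tau_p(t)/t$ for $t>0$ ($\rho_p(0):=\mathbf 1[\sigma(0)=p]$), $\hat\rho_p:=\limsup_{t\to\infty}\rho_p(t)$, $\mathcal P_\infty:=\{p:\sup\{t\ge0:\sigma(t)=p\}=\infty\}$, $\mathcal P_+:=\{p:\hat\rho_p>0\}$. $\limsup_{t\to\infty:\sigma(t)=p}g(t):=\lim_{s\to\infty}\sup\{g(t):t\ge s,\sigma(t)=p\}$, and analogously for $\liminf$. *)

theory Defs
  imports "HOL-Analysis.Analysis"
begin

definition switching_signal :: "'p set \<Rightarrow> (real \<Rightarrow> 'p) \<Rightarrow> bool" where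
  "switching_signal P \<sigma> \<longleftrightarrow>
     (\<forall>t\<ge>0. \<sigma> t \<in> P) \<and>
     (\<forall>T>0. \<exists>ts::real list. ts \<noteq> [] \<and> sorted_wrt (<) ts \<and> hd ts = 0 \<and> last ts = T \<and>
        (\<forall>j < length ts - 1. \<forall>s \<in> {ts!j..<ts!(j+1)}. \<sigma> s = \<sigma> (ts!j)))"

definition tau :: "(real \<Rightarrow> 'p) \<Rightarrow> 'p \<Rightarrow> real \<Rightarrow> real" where
  "tau \<sigma> p t = (LINT s:{0..t}|lborel. indicator {s. \<sigma> s = p} s)"

definition rho :: "(real \<Rightarrow> 'p) \<Rightarrow> 'p \<Rightarrow> real \<Rightarrow> real" where
  "rho \<sigma> p t = (if t > 0 then tau \<sigma> p t / t else (if \<sigma> 0 = p then 1 else 0))"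

definition rho_hat :: "(real \<Rightarrow> 'p) \<Rightarrow> 'p \<Rightarrow> ereal" where
  "rho_hat \<sigma> p = Limsup at_top (\<lambda>t. ereal (rho \<sigma> p t))"

definition P_inf :: "'p set \<Rightarrow> (real \<Rightarrow> 'p) \<Rightarrow> 'p set" where
  "P_inf P \<sigma> = {p \<in> P. Sup (ereal ` {t. t \<ge> 0 \<and> \<sigma> t = p}) = \<infinity>}"

definition P_plus :: "'p set \<Rightarrow> (real \<Rightarrow> 'p) \<Rightarrow> 'p set" where
  "P_plus P \<sigma> = {p \<in> P. rho_hat \<sigma> p > 0}"

definition limsup_on :: "(real \<Rightarrow> 'p) \<Rightarrow> 'p \<Rightarrow> (real \<Rightarrow> real) \<Rightarrow> ereal" where
  "limsup_on \<sigma> p g = Limsup (inf at_top (principal {t. \<sigma> t = p})) (\<lambda>t. ereal (g t))"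

definition liminf_on :: "(real \<Rightarrow> 'p) \<Rightarrow> 'p \<Rightarrow> (real \<Rightarrow> real) \<Rightarrow> ereal" where
  "liminf_on \<sigma> p g = Liminf (inf at_top (principal {t. \<sigma> t = p})) (\<lambda>t. ereal (g t))"

definition accum :: "'p set \<Rightarrow> (real \<Rightarrow> 'p) \<Rightarrow> ('p \<Rightarrow> real \<Rightarrow> real) \<Rightarrow> real \<Rightarrow> real" where
  "accum P \<sigma> a t = (\<Sum>p\<in>P. LINT s:{0..t}|lborel. a p s * indicator {s. \<sigma> s = p} s)"

end

theory Submission
  imports Defs
begin

(* For a mode p, eventually a_p \<le> limsup_on + d at the times when \<sigma> = p, so the integral of
   a_p over these times up to t is at most limsup_on * tau_p(t) + d t + O(1); a mode that is
   eventually inactive has limsup_on = -\<infinity> and is covered as well. If rho_hat p \<le> 0 then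
   tau_p(t) = o(t), so such a mode contributes o(t) and only the modes of P_plus remain.
   All these errors are o(T) uniformly for t in [0,T] (the relation le_up_to_sublinear),
   so they vanish from each limsup after division by T. The lower bounds are the upper
   bound applied to -a. *)

lemma Limsup_sum_mono_eps:
  fixes X Y :: "'i \<Rightarrow> 'a \<Rightarrow> real"
  assumes F: "F \<noteq> bot" and I: "finite I"
    and le: "\<And>i e. i \<in> I \<Longrightarrow> e > 0 \<Longrightarrow> eventually (\<lambda>x. X i x \<le> Y i x + e) F"
  shows "Limsup F (\<lambda>x. ereal (\<Sum>i\<in>I. X i x)) \<le> Limsup F (\<lambda>x. ereal (\<Sum>i\<in>I. Y i x))"
proof (rule ereal_le_epsilon2)
  fix e :: real assume "e > 0"
  define e' where "e' = e / (card I + 1)"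
  have "e' > 0" using \<open>e > 0\<close> by (simp add: e'_def)
  have "card I * e' \<le> e" using \<open>e > 0\<close> by (simp add: e'_def field_simps)
  have "eventually (\<lambda>x. \<forall>i\<in>I. X i x \<le> Y i x + e') F"
    using le \<open>e' > 0\<close> by (simp add: eventually_ball_finite I)
  then have "eventually (\<lambda>x. ereal (\<Sum>i\<in>I. X i x) \<le> ereal (\<Sum>i\<in>I. Y i x) + ereal e) F"
  proof (rule eventually_mono)
    fix x assume "\<forall>i\<in>I. X i x \<le> Y i x + e'"
    then have "(\<Sum>i\<in>I. X i x) \<le> (\<Sum>i\<in>I. Y i x + e')" by (intro sum_mono) auto
    also have "\<dots> = (\<Sum>i\<in>I. Y i x) + card I * e'" by (simp add: sum.distrib)
    finally show "ereal (\<Sum>i\<in>I. X i x) \<le> ereal (\<Sum>i\<in>I. Y i x) + ereal e"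
      using \<open>card I * e' \<le> e\<close> by simp
  qed
  then have "Limsup F (\<lambda>x. ereal (\<Sum>i\<in>I. X i x))
      \<le> Limsup F (\<lambda>x. ereal (\<Sum>i\<in>I. Y i x) + ereal e)"
    by (rule Limsup_mono)
  also have "\<dots> = Limsup F (\<lambda>x. ereal (\<Sum>i\<in>I. Y i x)) + ereal e"
    by (rule Limsup_add_ereal_right[OF F]) simp
  finally show "Limsup F (\<lambda>x. ereal (\<Sum>i\<in>I. X i x))
      \<le> Limsup F (\<lambda>x. ereal (\<Sum>i\<in>I. Y i x)) + ereal e" .
qed

definition le_up_to_sublinear :: "(real \<Rightarrow> real) \<Rightarrow> (real \<Rightarrow> real) \<Rightarrow> bool" where
  "le_up_to_sublinear u v \<longleftrightarrow> (\<forall>e>0. eventually (\<lambda>T. \<forall>t\<in>{0..T}. u t \<le> v t + e * T) at_top)"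

lemma le_up_to_sublinearI:
  assumes "\<And>d. d > 0 \<Longrightarrow> \<exists>K. \<forall>t\<ge>0. u t \<le> v t + K + d * t"
  shows "le_up_to_sublinear u v"
  unfolding le_up_to_sublinear_def
proof (intro allI impI)
  fix e :: real assume "e > 0"
  then obtain K where K: "\<forall>t\<ge>0. u t \<le> v t + K + e/2 * t" using assms[of "e/2"] by auto
  have "eventually (\<lambda>T. 2 * \<bar>K\<bar> / e \<le> T) at_top" by (rule eventually_ge_at_top)
  then show "eventually (\<lambda>T. \<forall>t\<in>{0..T}. u t \<le> v t + e * T) at_top"
  proof (rule eventually_mono)
    fix T assume "2 * \<bar>K\<bar> / e \<le> T"
    then have "\<bar>K\<bar> \<le> e/2 * T" using \<open>e > 0\<close> by (simp add: field_simps)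
    moreover have "e/2 * t \<le> e/2 * T" if "t \<le> T" for t using that \<open>e > 0\<close> by simp
    ultimately show "\<forall>t\<in>{0..T}. u t \<le> v t + e * T" using K by fastforce
  qed
qed

lemma le_up_to_sublinear_trans:
  assumes "le_up_to_sublinear u v" and "le_up_to_sublinear v w"
  shows "le_up_to_sublinear u w"
  unfolding le_up_to_sublinear_def
proof (intro allI impI)
  fix e :: real assume "e > 0"
  then have "e/2 > 0" by simp
  with assms have "eventually (\<lambda>T. \<forall>t\<in>{0..T}. u t \<le> v t + e/2 * T) at_top"
    "eventually (\<lambda>T. \<forall>t\<in>{0..T}. v t \<le> w t + e/2 * T) at_top"
    unfolding le_up_to_sublinear_def by blast+
  then show "eventually (\<lambda>T. \<forall>t\<in>{0..T}. u t \<le> w t + e * T) at_top"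
    by eventually_elim fastforce
qed

lemma le_up_to_sublinear_add:
  assumes "le_up_to_sublinear u v" and "le_up_to_sublinear u' v'"
  shows "le_up_to_sublinear (\<lambda>t. u t + u' t) (\<lambda>t. v t + v' t)"
  unfolding le_up_to_sublinear_def
proof (intro allI impI)
  fix e :: real assume "e > 0"
  then have "e/2 > 0" by simp
  with assms have "eventually (\<lambda>T. \<forall>t\<in>{0..T}. u t \<le> v t + e/2 * T) at_top"
    "eventually (\<lambda>T. \<forall>t\<in>{0..T}. u' t \<le> v' t + e/2 * T) at_top"
    unfolding le_up_to_sublinear_def by blast+
  then show "eventually (\<lambda>T. \<forall>t\<in>{0..T}. u t + u' t \<le> v t + v' t + e * T) at_top"
    by eventually_elim fastforce
qed

lemma le_up_to_sublinear_sum: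
  assumes "finite I" and "\<And>i. i \<in> I \<Longrightarrow> le_up_to_sublinear (u i) (v i)"
  shows "le_up_to_sublinear (\<lambda>t. \<Sum>i\<in>I. u i t) (\<lambda>t. \<Sum>i\<in>I. v i t)"
  using assms
proof (induction I rule: finite_induct)
  case empty
  show ?case by (simp add: le_up_to_sublinear_def)
next
  case (insert i I)
  then show ?case by (simp add: le_up_to_sublinear_add)
qed

lemma le_up_to_sublinear_uminus:
  assumes "le_up_to_sublinear u v"
  shows "le_up_to_sublinear (\<lambda>t. - v t) (\<lambda>t. - u t)"
proof -
  have "- v t \<le> - u t + e * T \<longleftrightarrow> u t \<le> v t + e * T" for t e T :: real by linarith
  then show ?thesis using assms unfolding le_up_to_sublinear_def by simp
qed

lemma le_up_to_sublinear_avg_SUP: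
  assumes le: "le_up_to_sublinear u v" and bdd: "\<And>T. 0 \<le> T \<Longrightarrow> bdd_above (v ` {0..T})"
    and "e > 0"
  shows "eventually (\<lambda>T. (1/T) * (SUP t\<in>{0..T}. u t) \<le> (1/T) * (SUP t\<in>{0..T}. v t) + e) at_top"
proof -
  have "eventually (\<lambda>T. T > 0 \<and> (\<forall>t\<in>{0..T}. u t \<le> v t + e * T)) at_top"
    using le \<open>e > 0\<close> by (simp add: le_up_to_sublinear_def eventually_conj_iff eventually_gt_at_top)
  then show ?thesis
  proof (rule eventually_mono, elim conjE)
    fix T assume "T > 0" and uv: "\<forall>t\<in>{0..T}. u t \<le> v t + e * T"
    have "(SUP t\<in>{0..T}. u t) \<le> (SUP t\<in>{0..T}. v t) + e * T"
    proof (rule cSUP_least)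
      show "{0..T} \<noteq> {}" using \<open>T > 0\<close> by simp
      fix t assume t: "t \<in> {0..T}"
      have "v t \<le> (SUP t\<in>{0..T}. v t)" using bdd \<open>T > 0\<close> t by (intro cSUP_upper) auto
      then show "u t \<le> (SUP t\<in>{0..T}. v t) + e * T" using uv t by fastforce
    qed
    then show "(1/T) * (SUP t\<in>{0..T}. u t) \<le> (1/T) * (SUP t\<in>{0..T}. v t) + e"
      using \<open>T > 0\<close> by (simp add: field_simps)
  qed
qed

lemma le_up_to_sublinear_div:
  assumes "le_up_to_sublinear u v" and "e > 0"
  shows "eventually (\<lambda>t. u t / t \<le> v t / t + e) at_top"
proof -
  have "eventually (\<lambda>T. T > 0 \<and> (\<forall>t\<in>{0..T}. u t \<le> v t + e * T)) at_top"
    using assms by (simp add: le_up_to_sublinear_def eventually_conj_iff eventually_gt_at_top)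
  then show ?thesis by (rule eventually_mono) (auto simp: field_simps)
qed

lemma Limsup_sum_avg_SUP_mono:
  assumes "finite I" and "\<And>i. i \<in> I \<Longrightarrow> le_up_to_sublinear (u i) (v i)"
    and "\<And>i T. i \<in> I \<Longrightarrow> 0 \<le> T \<Longrightarrow> bdd_above (v i ` {0..T})"
  shows "Limsup at_top (\<lambda>T. ereal (\<Sum>i\<in>I. (1/T) * (SUP t\<in>{0..T}. u i t)))
    \<le> Limsup at_top (\<lambda>T. ereal (\<Sum>i\<in>I. (1/T) * (SUP t\<in>{0..T}. v i t)))"
  using assms by (intro Limsup_sum_mono_eps le_up_to_sublinear_avg_SUP) auto

lemma Limsup_sum_max_rho_mono:
  assumes "finite I" and "\<And>i. i \<in> I \<Longrightarrow> le_up_to_sublinear (\<lambda>t. \<Sum>p\<in>Q. c i p * tau \<sigma> p t) (v i)"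
  shows "Limsup at_top (\<lambda>t. ereal (\<Sum>i\<in>I. max (\<Sum>p\<in>Q. c i p * rho \<sigma> p t) 0))
    \<le> Limsup at_top (\<lambda>t. ereal (\<Sum>i\<in>I. max ((1/t) * v i t) 0))"
proof (rule Limsup_sum_mono_eps)
  fix i and e :: real assume "i \<in> I" and "e > 0"
  have "eventually (\<lambda>t. 0 < t \<and> (\<Sum>p\<in>Q. c i p * tau \<sigma> p t) / t \<le> v i t / t + e) at_top"
    using le_up_to_sublinear_div[OF assms(2)[OF \<open>i \<in> I\<close>] \<open>e > 0\<close>]
    by (simp add: eventually_conj_iff eventually_gt_at_top)
  then show "eventually (\<lambda>t. max (\<Sum>p\<in>Q. c i p * rho \<sigma> p t) 0 \<le> max ((1/t) * v i t) 0 + e) at_top"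
    by (rule eventually_mono) (use \<open>e > 0\<close> in \<open>auto simp: rho_def sum_divide_distrib max_def\<close>)
qed (use assms in auto)

lemma list_ex_bracketing_index:
  fixes ts :: "real list"
  assumes "ts \<noteq> []" and "hd ts \<le> s" and "s < last ts"
  shows "\<exists>j < length ts - 1. ts!j \<le> s \<and> s < ts!(j+1)"
  using assms
proof (induction ts)
  case Nil
  then show ?case by simp
next
  case (Cons x rest)
  show ?case
  proof (cases "rest = [] \<or> s < hd rest")
    case True
    then show ?thesis using Cons.prems by (cases rest) (auto intro!: exI[of _ 0])
  next
    case False
    then obtain j where "j < length rest - 1" "rest!j \<le> s" "s < rest!(j+1)"
      using Cons.IH Cons.prems by auto
    then show ?thesis using False by (auto intro!: exI[of _ "Suc j"])
  qed
qed

lemma switching_signal_mode_set_sets: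
  assumes "switching_signal P \<sigma>"
  shows "{0..T} \<inter> {s. \<sigma> s = p} \<in> sets lborel"
proof -
  have "\<bar>T\<bar> + 1 > 0" by simp
  then obtain ts :: "real list" where ts: "ts \<noteq> []" "hd ts = 0" "last ts = \<bar>T\<bar> + 1"
    and const: "\<forall>j < length ts - 1. \<forall>s \<in> {ts!j..<ts!(j+1)}. \<sigma> s = \<sigma> (ts!j)"
    using assms unfolding switching_signal_def by blast
  define U where "U = (\<Union>j\<in>{j. j < length ts - 1 \<and> \<sigma> (ts!j) = p}. {ts!j..<ts!(j+1)})"
  have "{0..<\<bar>T\<bar> + 1} \<inter> {s. \<sigma> s = p} = {0..<\<bar>T\<bar> + 1} \<inter> U"
  proof (intro equalityI subsetI)
    fix s assume s: "s \<in> {0..<\<bar>T\<bar> + 1} \<inter> {s. \<sigma> s = p}"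
    then have "hd ts \<le> s" "s < last ts" using ts(2,3) by auto
    then obtain j where j: "j < length ts - 1" "ts!j \<le> s" "s < ts!(j+1)"
      using list_ex_bracketing_index[OF ts(1)] by blast
    have "\<sigma> s = \<sigma> (ts!j)" using j by (intro const[rule_format]) auto
    then have "\<sigma> (ts!j) = p" using s by simp
    then have "s \<in> U" unfolding U_def using j by (intro UN_I[of j]) auto
    then show "s \<in> {0..<\<bar>T\<bar> + 1} \<inter> U" using s by blast
  next
    fix s assume s: "s \<in> {0..<\<bar>T\<bar> + 1} \<inter> U"
    then obtain j where j: "j < length ts - 1" "\<sigma> (ts!j) = p" "s \<in> {ts!j..<ts!(j+1)}"
      unfolding U_def by blast
    have "\<sigma> s = \<sigma> (ts!j)" using j by (intro const[rule_format]) auto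
    then have "\<sigma> s = p" using j(2) by simp
    then show "s \<in> {0..<\<bar>T\<bar> + 1} \<inter> {s. \<sigma> s = p}" using s by blast
  qed
  moreover have "{0..T} \<subseteq> {0..<\<bar>T\<bar> + 1}" by auto
  ultimately have "{0..T} \<inter> {s. \<sigma> s = p} = {0..T} \<inter> U" by blast
  moreover have "U \<in> sets lborel" unfolding U_def by (intro sets.finite_UN) auto
  ultimately show ?thesis by simp
qed

lemma mode_set_fmeasurable:
  assumes "switching_signal P \<sigma>"
  shows "{0..t} \<inter> {s. \<sigma> s = p} \<in> fmeasurable lborel"
  using switching_signal_mode_set_sets[OF assms]
  by (intro fmeasurableI2[OF fmeasurable_compact[OF compact_Icc, of 0 t]]) auto

lemma tau_eq_measure: "tau \<sigma> p t = measure lborel ({0..t} \<inter> {s. \<sigma> s = p})"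
proof -
  have "tau \<sigma> p t = integral\<^sup>L lborel (indicator ({0..t} \<inter> {s. \<sigma> s = p}) :: real \<Rightarrow> real)"
    unfolding tau_def set_lebesgue_integral_def
    by (rule Bochner_Integration.integral_cong) (auto simp: indicator_def)
  then show ?thesis by simp
qed

lemma tau_nonneg: "0 \<le> tau \<sigma> p t"
  by (simp add: tau_eq_measure)

lemma tau_le:
  assumes "switching_signal P \<sigma>" and "0 \<le> t"
  shows "tau \<sigma> p t \<le> t"
proof -
  have "tau \<sigma> p t \<le> measure lborel {0..t}"
    unfolding tau_eq_measure
    using mode_set_fmeasurable[OF assms(1), of t p] fmeasurable_compact[OF compact_Icc, of 0 t]
    by (intro measure_mono_fmeasurable) (auto simp: fmeasurable_def)
  then show ?thesis using assms(2) by simp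
qed

lemma set_integral_mode_indicator:
  "(LINT s:{0..t}|lborel. f s * indicator {s. \<sigma> s = p} s)
    = (LINT s:{0..t} \<inter> {s. \<sigma> s = p}|lborel. (f s :: real))"
  unfolding set_lebesgue_integral_def
  by (rule Bochner_Integration.integral_cong) (auto simp: indicator_def)

lemma set_integrable_const_fmeasurable:
  "A \<in> fmeasurable M \<Longrightarrow> set_integrable M A (\<lambda>_. c :: real)"
  unfolding set_integrable_def by (auto simp: fmeasurable_def)

lemma mode_integral_le:
  assumes sw: "switching_signal P \<sigma>" and int: "\<And>t. 0 \<le> t \<Longrightarrow> set_integrable lborel {0..t} f"
    and "0 \<le> s\<^sub>0" and "0 \<le> t"
    and bnd: "\<And>s. s\<^sub>0 < s \<Longrightarrow> s \<le> t \<Longrightarrow> \<sigma> s = p \<Longrightarrow> f s \<le> L"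
  shows "(LINT s:{0..t}|lborel. f s * indicator {s. \<sigma> s = p} s)
    \<le> (LINT s:{0..s\<^sub>0}|lborel. \<bar>f s - L\<bar>) + L * tau \<sigma> p t"
proof -
  let ?A = "{0..t} \<inter> {s. \<sigma> s = p}"
  have A: "?A \<in> fmeasurable lborel" by (rule mode_set_fmeasurable[OF sw])
  have intA: "set_integrable lborel ?A f"
    using A by (intro set_integrable_subset[OF int[OF \<open>0 \<le> t\<close>]]) (auto simp: fmeasurable_def)
  have intA': "set_integrable lborel ?A (\<lambda>s. f s - L)"
    using intA A by (intro set_integral_diff(1) set_integrable_const_fmeasurable)
  have int0: "set_integrable lborel {0..s\<^sub>0} (\<lambda>s. \<bar>f s - L\<bar>)"
    using \<open>0 \<le> s\<^sub>0\<close> fmeasurable_compact[OF compact_Icc]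
    by (intro set_integrable_abs set_integral_diff(1) int set_integrable_const_fmeasurable)
  have "(LINT s:?A|lborel. f s - L) \<le> (LINT s:{0..s\<^sub>0}|lborel. \<bar>f s - L\<bar>)"
    unfolding set_lebesgue_integral_def
  proof (rule integral_mono)
    show "integrable lborel (\<lambda>s. indicator ?A s *\<^sub>R (f s - L))"
      and "integrable lborel (\<lambda>s. indicator {0..s\<^sub>0} s *\<^sub>R \<bar>f s - L\<bar>)"
      using intA' int0 by (simp_all add: set_integrable_def)
    fix s :: real
    \<comment> \<open>beyond \<open>s\<^sub>0\<close> the left integrand is nonpositive\<close>
    show "indicator ?A s *\<^sub>R (f s - L) \<le> indicator {0..s\<^sub>0} s *\<^sub>R \<bar>f s - L\<bar>"
      using bnd[of s] by (auto simp: indicator_def)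
  qed
  moreover have "(LINT s:?A|lborel. L) = measure lborel ?A * L"
    using A set_integral_const[of ?A lborel L] by (auto simp: fmeasurable_def less_top)
  then have "(LINT s:?A|lborel. f s - L) = (LINT s:?A|lborel. f s) - L * tau \<sigma> p t"
    using intA A by (simp add: set_integral_diff(2) set_integrable_const_fmeasurable tau_eq_measure)
  ultimately show ?thesis by (simp add: set_integral_mode_indicator)
qed

lemma mode_integral_le_up_to_sublinear:
  assumes sw: "switching_signal P \<sigma>" and int: "\<And>t. 0 \<le> t \<Longrightarrow> set_integrable lborel {0..t} f"
    and fin: "limsup_on \<sigma> p f \<noteq> \<infinity>"
  shows "le_up_to_sublinear (\<lambda>t. LINT s:{0..t}|lborel. f s * indicator {s. \<sigma> s = p} s)
    (\<lambda>t. real_of_ereal (limsup_on \<sigma> p f) * tau \<sigma> p t)"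
proof (rule le_up_to_sublinearI)
  fix d :: real assume "d > 0"
  let ?L = "real_of_ereal (limsup_on \<sigma> p f)"
  \<comment> \<open>If \<open>limsup_on \<sigma> p f = -\<infinity>\<close> then \<open>?L = 0\<close>, and the bound below still holds.\<close>
  have "limsup_on \<sigma> p f < ereal (?L + d)"
    using fin \<open>d > 0\<close> by (cases "limsup_on \<sigma> p f") auto
  then have "eventually (\<lambda>s. \<sigma> s = p \<longrightarrow> f s < ?L + d) at_top"
    unfolding limsup_on_def by (auto dest: Limsup_lessD simp: eventually_inf_principal)
  then obtain s0 where s0: "\<And>s. s0 \<le> s \<Longrightarrow> \<sigma> s = p \<Longrightarrow> f s < ?L + d"
    by (auto simp: eventually_at_top_linorder)
  define K where "K = (LINT s:{0..max s0 0}|lborel. \<bar>f s - (?L + d)\<bar>)"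
  have "(LINT s:{0..t}|lborel. f s * indicator {s. \<sigma> s = p} s) \<le> ?L * tau \<sigma> p t + K + d * t"
    if "0 \<le> t" for t
  proof -
    have "(LINT s:{0..t}|lborel. f s * indicator {s. \<sigma> s = p} s) \<le> K + (?L + d) * tau \<sigma> p t"
      unfolding K_def using s0 that by (intro mode_integral_le[OF sw int]) (auto simp: less_imp_le)
    moreover have "d * tau \<sigma> p t \<le> d * t" using tau_le[OF sw that] \<open>d > 0\<close> by simp
    ultimately show ?thesis by (simp add: algebra_simps)
  qed
  then show "\<exists>K. \<forall>t\<ge>0. (LINT s:{0..t}|lborel. f s * indicator {s. \<sigma> s = p} s)
      \<le> ?L * tau \<sigma> p t + K + d * t" by blast
qed

lemma le_up_to_sublinear_tau_zero:
  assumes sw: "switching_signal P \<sigma>" and "rho_hat \<sigma> p \<le> 0"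
  shows "le_up_to_sublinear (\<lambda>t. c * tau \<sigma> p t) (\<lambda>_. 0)"
proof (rule le_up_to_sublinearI)
  fix d :: real assume "d > 0"
  define \<delta> where "\<delta> = d / (\<bar>c\<bar> + 1)"
  have "\<delta> > 0" and c\<delta>: "\<bar>c\<bar> * \<delta> \<le> d" using \<open>d > 0\<close> by (auto simp: \<delta>_def field_simps)
  have "Limsup at_top (\<lambda>t. ereal (rho \<sigma> p t)) < ereal \<delta>"
    using assms(2) \<open>\<delta> > 0\<close> unfolding rho_hat_def by (simp add: le_less_trans)
  then have "eventually (\<lambda>t. ereal (rho \<sigma> p t) < ereal \<delta>) at_top" by (rule Limsup_lessD)
  then obtain N where N: "\<And>t. N \<le> t \<Longrightarrow> rho \<sigma> p t < \<delta>"
    by (auto simp: eventually_at_top_linorder)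
  define N1 where "N1 = max N 1"
  have "c * tau \<sigma> p t \<le> 0 + \<bar>c\<bar> * N1 + d * t" if "0 \<le> t" for t
  proof -
    have "tau \<sigma> p t \<le> N1 + \<delta> * t"
    proof (cases "N1 \<le> t")
      case True
      then have "0 < t" by (simp add: N1_def)
      moreover have "rho \<sigma> p t < \<delta>" using N True by (simp add: N1_def)
      ultimately have "tau \<sigma> p t < \<delta> * t" by (simp add: rho_def field_simps)
      then show ?thesis by (simp add: N1_def)
    next
      case False
      moreover have "0 \<le> \<delta> * t" using \<open>\<delta> > 0\<close> that by simp
      ultimately show ?thesis using tau_le[OF sw that, of p] by linarith
    qed
    then have "\<bar>c\<bar> * tau \<sigma> p t \<le> \<bar>c\<bar> * (N1 + \<delta> * t)" by (simp add: mult_left_mono)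
    then have "\<bar>c\<bar> * tau \<sigma> p t \<le> \<bar>c\<bar> * N1 + \<bar>c\<bar> * \<delta> * t" by (simp add: algebra_simps)
    moreover have "c * tau \<sigma> p t \<le> \<bar>c\<bar> * tau \<sigma> p t" using tau_nonneg by (intro mult_right_mono) auto
    moreover have "\<bar>c\<bar> * \<delta> * t \<le> d * t" using c\<delta> that by (rule mult_right_mono)
    ultimately show ?thesis by linarith
  qed
  then show "\<exists>K. \<forall>t\<ge>0. c * tau \<sigma> p t \<le> 0 + K + d * t" by blast
qed

lemma not_P_inf_mode_filter_eq_bot:
  assumes "p \<in> P" and "p \<notin> P_inf P \<sigma>"
  shows "inf at_top (principal {t. \<sigma> t = p}) = bot"
proof -
  have "Sup (ereal ` {t. t \<ge> 0 \<and> \<sigma> t = p}) \<noteq> \<infinity>" using assms by (simp add: P_inf_def)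
  then obtain r :: real where r: "Sup (ereal ` {t. t \<ge> 0 \<and> \<sigma> t = p}) \<le> ereal r"
    by (cases "Sup (ereal ` {t. t \<ge> 0 \<and> \<sigma> t = p})") auto
  have inactive: "\<sigma> t \<noteq> p" if "max r 0 < t" for t
  proof
    assume "\<sigma> t = p"
    then have "ereal t \<le> ereal r" using that by (intro order_trans[OF Sup_upper r]) auto
    then show False using that by simp
  qed
  have "eventually (\<lambda>t. max r 0 < t) at_top" by (rule eventually_gt_at_top)
  then have "eventually (\<lambda>t. \<sigma> t = p \<longrightarrow> False) at_top"
    by (rule eventually_mono) (use inactive in blast)
  then show ?thesis by (simp add: eventually_False[symmetric] eventually_inf_principal)
qed

lemma limsup_on_uminus: "limsup_on \<sigma> p (\<lambda>t. - g t) = - liminf_on \<sigma> p g"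
  unfolding limsup_on_def liminf_on_def using ereal_Limsup_uminus[of _ "\<lambda>t. ereal (g t)"] by simp

lemma accum_uminus: "accum P \<sigma> (\<lambda>p t. - f p t) t = - accum P \<sigma> f t"
  unfolding accum_def sum_negf[symmetric]
  by (rule sum.cong[OF refl]) (simp add: set_lebesgue_integral_def)

lemma accum_le_up_to_sublinear:
  assumes finP: "finite P" and sw: "switching_signal P \<sigma>"
    and int: "\<And>p t. p \<in> P \<Longrightarrow> 0 \<le> t \<Longrightarrow> set_integrable lborel {0..t} (f p)"
    and fin: "\<And>p. p \<in> P_inf P \<sigma> \<Longrightarrow> \<bar>limsup_on \<sigma> p (f p)\<bar> \<noteq> \<infinity>"
  shows "le_up_to_sublinear (accum P \<sigma> f)
    (\<lambda>t. \<Sum>p\<in>P_plus P \<sigma>. real_of_ereal (limsup_on \<sigma> p (f p)) * tau \<sigma> p t)"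
proof -
  let ?c = "\<lambda>p t. LINT s:{0..t}|lborel. f p s * indicator {s. \<sigma> s = p} s"
  let ?g = "\<lambda>p t. real_of_ereal (limsup_on \<sigma> p (f p)) * tau \<sigma> p t"
  have "le_up_to_sublinear (?c p) (\<lambda>t. if rho_hat \<sigma> p > 0 then ?g p t else 0)" if "p \<in> P" for p
  proof -
    have "limsup_on \<sigma> p (f p) \<noteq> \<infinity>"
    proof (cases "p \<in> P_inf P \<sigma>")
      case True
      then show ?thesis using fin[OF True] by auto
    next
      case False
      then show ?thesis using not_P_inf_mode_filter_eq_bot[OF that] by (simp add: limsup_on_def bot_ereal_def)
    qed
    then have c: "le_up_to_sublinear (?c p) (?g p)"
      using int that by (intro mode_integral_le_up_to_sublinear[OF sw]) auto
    show ?thesis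
    proof (cases "rho_hat \<sigma> p > 0")
      case True
      with c show ?thesis by simp
    next
      case False
      then have "le_up_to_sublinear (?g p) (\<lambda>_. 0)" by (intro le_up_to_sublinear_tau_zero[OF sw]) simp
      with c False show ?thesis by (simp add: le_up_to_sublinear_trans)
    qed
  qed
  then have "le_up_to_sublinear (\<lambda>t. \<Sum>p\<in>P. ?c p t) (\<lambda>t. \<Sum>p\<in>P. if rho_hat \<sigma> p > 0 then ?g p t else 0)"
    by (rule le_up_to_sublinear_sum[OF finP])
  moreover have "accum P \<sigma> f = (\<lambda>t. \<Sum>p\<in>P. ?c p t)" by (simp add: fun_eq_iff accum_def)
  ultimately show ?thesis by (simp add: P_plus_def sum.inter_filter[OF finP])
qed

lemma accum_ge_up_to_sublinear:
  assumes finP: "finite P" and sw: "switching_signal P \<sigma>"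
    and int: "\<And>p t. p \<in> P \<Longrightarrow> 0 \<le> t \<Longrightarrow> set_integrable lborel {0..t} (f p)"
    and fin: "\<And>p. p \<in> P_inf P \<sigma> \<Longrightarrow> \<bar>liminf_on \<sigma> p (f p)\<bar> \<noteq> \<infinity>"
  shows "le_up_to_sublinear
    (\<lambda>t. \<Sum>p\<in>P_plus P \<sigma>. real_of_ereal (liminf_on \<sigma> p (f p)) * tau \<sigma> p t) (accum P \<sigma> f)"
proof -
  have "set_integrable lborel {0..t} (\<lambda>s. - f p s)" if "p \<in> P" "0 \<le> t" for p t
    using set_integrable_mult_right[of "-1", OF int[OF that]] by simp
  then have "le_up_to_sublinear (accum P \<sigma> (\<lambda>p t. - f p t))
      (\<lambda>t. \<Sum>p\<in>P_plus P \<sigma>. real_of_ereal (limsup_on \<sigma> p (\<lambda>t. - f p t)) * tau \<sigma> p t)"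
    using fin by (intro accum_le_up_to_sublinear[OF finP sw]) (auto simp: limsup_on_uminus)
  from le_up_to_sublinear_uminus[OF this] show ?thesis
    by (simp add: accum_uminus limsup_on_uminus sum_negf)
qed

lemma bdd_above_tau_sum:
  assumes "switching_signal P \<sigma>"
  shows "bdd_above ((\<lambda>t. \<Sum>p\<in>Q. c p * tau \<sigma> p t) ` {0..T})"
proof (rule bdd_aboveI2)
  fix t assume t: "t \<in> {0..T}"
  have "c p * tau \<sigma> p t \<le> \<bar>c p\<bar> * T" for p
  proof -
    have "c p * tau \<sigma> p t \<le> \<bar>c p\<bar> * tau \<sigma> p t" using tau_nonneg by (intro mult_right_mono) auto
    also have "\<dots> \<le> \<bar>c p\<bar> * T" using tau_le[OF assms, of t p] t by (intro mult_left_mono) auto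
    finally show ?thesis .
  qed
  then show "(\<Sum>p\<in>Q. c p * tau \<sigma> p t) \<le> (\<Sum>p\<in>Q. \<bar>c p\<bar> * T)" by (intro sum_mono)
qed

lemma bdd_above_accum:
  assumes sw: "switching_signal P \<sigma>"
    and int: "\<And>p t. p \<in> P \<Longrightarrow> 0 \<le> t \<Longrightarrow> set_integrable lborel {0..t} (f p)"
  shows "bdd_above (accum P \<sigma> f ` {0..T})"
proof (rule bdd_aboveI2)
  fix t assume t: "t \<in> {0..T}"
  show "accum P \<sigma> f t \<le> (\<Sum>p\<in>P. LINT s:{0..T}|lborel. \<bar>f p s\<bar>)"
    unfolding accum_def
  proof (rule sum_mono)
    fix p assume "p \<in> P"
    show "(LINT s:{0..t}|lborel. f p s * indicator {s. \<sigma> s = p} s) \<le> (LINT s:{0..T}|lborel. \<bar>f p s\<bar>)"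
      using t mode_integral_le[OF sw int[OF \<open>p \<in> P\<close>], where s\<^sub>0 = T and t = t and L = 0] by simp
  qed
qed

theorem lemma7:
  fixes P :: "'p set" and \<sigma> :: "real \<Rightarrow> 'p" and m :: nat
    and a :: "nat \<Rightarrow> 'p \<Rightarrow> real \<Rightarrow> real"
  assumes finP: "finite P"
    and sw: "switching_signal P \<sigma>"
    and loc_int: "\<forall>i\<in>{1..m}. \<forall>p\<in>P. \<forall>t\<ge>0. set_integrable lborel {0..t} (a i p)"
  shows
   "((\<forall>i\<in>{1..m}. \<forall>p\<in>P_inf P \<sigma>. \<bar>limsup_on \<sigma> p (a i p)\<bar> \<noteq> \<infinity>) \<longrightarrow>
      Limsup at_top (\<lambda>T. ereal (\<Sum>i=1..m. (1/T) * (SUP t\<in>{0..T}. accum P \<sigma> (a i) t)))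
      \<le> Limsup at_top (\<lambda>T. ereal (\<Sum>i=1..m. (1/T) *
            (SUP t\<in>{0..T}. \<Sum>p\<in>P_plus P \<sigma>. real_of_ereal (limsup_on \<sigma> p (a i p)) * tau \<sigma> p t))))
    \<and>
    ((\<forall>i\<in>{1..m}. \<forall>p\<in>P_inf P \<sigma>. \<bar>liminf_on \<sigma> p (a i p)\<bar> \<noteq> \<infinity>) \<longrightarrow>
      Limsup at_top (\<lambda>T. ereal (\<Sum>i=1..m. (1/T) * (SUP t\<in>{0..T}. accum P \<sigma> (a i) t)))
      \<ge> Limsup at_top (\<lambda>T. ereal (\<Sum>i=1..m. (1/T) *
            (SUP t\<in>{0..T}. \<Sum>p\<in>P_plus P \<sigma>. real_of_ereal (liminf_on \<sigma> p (a i p)) * tau \<sigma> p t)))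
      \<and>
      Limsup at_top (\<lambda>t. ereal (\<Sum>i=1..m. max ((1/t) * accum P \<sigma> (a i) t) 0))
      \<ge> Limsup at_top (\<lambda>t. ereal (\<Sum>i=1..m.
            max (\<Sum>p\<in>P_plus P \<sigma>. real_of_ereal (liminf_on \<sigma> p (a i p)) * rho \<sigma> p t) 0)))"
proof -
  let ?acc = "\<lambda>i. accum P \<sigma> (a i)"
  let ?G_sup = "\<lambda>i t. \<Sum>p\<in>P_plus P \<sigma>. real_of_ereal (limsup_on \<sigma> p (a i p)) * tau \<sigma> p t"
  let ?G_inf = "\<lambda>i t. \<Sum>p\<in>P_plus P \<sigma>. real_of_ereal (liminf_on \<sigma> p (a i p)) * tau \<sigma> p t"
  have int: "\<And>i p t. i \<in> {1..m} \<Longrightarrow> p \<in> P \<Longrightarrow> 0 \<le> t \<Longrightarrow> set_integrable lborel {0..t} (a i p)"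
    using loc_int by blast
  show ?thesis
  proof (intro conjI impI)
    assume "\<forall>i\<in>{1..m}. \<forall>p\<in>P_inf P \<sigma>. \<bar>limsup_on \<sigma> p (a i p)\<bar> \<noteq> \<infinity>"
    then show "Limsup at_top (\<lambda>T. ereal (\<Sum>i=1..m. (1/T) * (SUP t\<in>{0..T}. ?acc i t)))
      \<le> Limsup at_top (\<lambda>T. ereal (\<Sum>i=1..m. (1/T) * (SUP t\<in>{0..T}. ?G_sup i t)))"
      using int by (intro Limsup_sum_avg_SUP_mono accum_le_up_to_sublinear[OF finP sw]
          bdd_above_tau_sum[OF sw]) auto
  next
    assume "\<forall>i\<in>{1..m}. \<forall>p\<in>P_inf P \<sigma>. \<bar>liminf_on \<sigma> p (a i p)\<bar> \<noteq> \<infinity>"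
    then have ge: "\<And>i. i \<in> {1..m} \<Longrightarrow> le_up_to_sublinear (?G_inf i) (?acc i)"
      using int by (intro accum_ge_up_to_sublinear[OF finP sw]) auto
    then show "Limsup at_top (\<lambda>T. ereal (\<Sum>i=1..m. (1/T) * (SUP t\<in>{0..T}. ?acc i t)))
      \<ge> Limsup at_top (\<lambda>T. ereal (\<Sum>i=1..m. (1/T) * (SUP t\<in>{0..T}. ?G_inf i t)))"
      using int by (intro Limsup_sum_avg_SUP_mono bdd_above_accum[OF sw]) auto
    from ge show "Limsup at_top (\<lambda>t. ereal (\<Sum>i=1..m. max ((1/t) * ?acc i t) 0))
      \<ge> Limsup at_top (\<lambda>t. ereal (\<Sum>i=1..m.
            max (\<Sum>p\<in>P_plus P \<sigma>. real_of_ereal (liminf_on \<sigma> p (a i p)) * rho \<sigma> p t) 0))"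
      by (rule Limsup_sum_max_rho_mono[OF finite_atLeastAtMost])
  qed
qed

end
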